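(* Let $\mathcal C=(A,\bar A,B,\bar B,C,\bar C,D,\bar D,E,\bar E,F,\bar F)$ be a coefficient tuple and $\mathcal W=(Q,\bar Q,S,\bar S,R,\bar R,G,\bar G)$ a weight tuple satisfying Assumption (S); let $\mathcal C_1,\mathcal W_1$ be as in the context. Then: (1) the first Riccati equation (for $P$) of $\mathrm{Ric}(\mathcal C_1,\mathcal W_1)$ is the same equation as the first Riccati equation of $\mathrm{Ric}(\mathcal C,\mathcal W)$; (2) the second Riccati equation (for $\Pi$) of $\mathrm{Ric}(\mathcal C_1,\mathcal W_1)$ is the same equation as the second Riccati equation of $\mathrm{Ric}(\mathcal C,\mathcal W)$. That is, the terminal conditions coincide and, for every $t$ and every $P_t,\Pi_t\in\mathbb S^n$ for which $\Sigma_{0t}$ and $\Sigma_{1t}$ are invertible, the corresponding left-hand side expressions coincide.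
   Context: Fix $T>0$, integers $n,m\ge1$, a nonempty $\Theta\subseteq\mathbb R\setminus\{0\}$ and a $\sigma$-finite measure $\nu$ on $\Theta$ with $\int_\Theta(1\wedge\theta^2)\nu(d\theta)<\infty$. $\mathbb S^k$: symmetric $k\times k$ matrices; $M\ge\alpha I$ means $M-\alpha I$ positive semidefinite. $L^\infty(0,T;M)$: bounded functions; $L^2_\nu(M)$: deterministic $r:[0,T]\times\Theta\to M$ with $\sup_t\int_\Theta|r(t,\theta)|^2\nu(d\theta)<\infty$. A coefficient tuple $\mathcal C=(A,\bar A,B,\bar B,C,\bar C,D,\bar D,E,\bar E,F,\bar F)$: deterministic $A,\bar A,C,\bar C\in L^\infty(0,T;\mathbb R^{n\times n})$, $B,\bar B,D,\bar D\in L^\infty(0,T;\mathbb R^{n\times m})$, $E,\bar E\in L^2_\nu(\mathbb R^{n\times n})$, $F,\bar F\in L^2_\nu(\mathbb R^{n\times m})$. A weight tuple $\mathcal W=(Q,\bar Q,S,\bar S,R,\bar R,G,\bar G)$: $Q,\bar Q\in L^\infty(0,T;\mathbb S^n)$, $R,\bar R\in L^\infty(0,T;\mathbb S^m)$, $S,\bar S\in L^\infty(0,T;\mathbb R^{n\times m})$, $G,\bar G\in\mathbb S^n$. Riccati system $\mathrm{Ric}(\mathcal C,\mathcal W)$: for deterministic $P,\Pi:[0,T]\to\mathbb S^n$, with $\Sigma_{0t}=R_t+D_t^\top P_tD_t+\int_\Theta F_{t,\theta}^\top P_tF_{t,\theta}\nu(d\theta)$, $\Sigma_{1t}=R_t+\bar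 R_t+(D_t+\bar D_t)^\top P_t(D_t+\bar D_t)+\int_\Theta(F_{t,\theta}+\bar F_{t,\theta})^\top P_t(F_{t,\theta}+\bar F_{t,\theta})\nu(d\theta)$: $\dot P_t+P_tA_t+A_t^\top P_t+C_t^\top P_tC_t+\int_\Theta E_{t,\theta}^\top P_tE_{t,\theta}\nu(d\theta)+Q_t-\big(S_t+P_tB_t+C_t^\top P_tD_t+\int_\Theta E_{t,\theta}^\top P_tF_{t,\theta}\nu(d\theta)\big)\Sigma_{0t}^{-1}\big(S_t^\top+B_t^\top P_t+D_t^\top P_tC_t+\int_\Theta F_{t,\theta}^\top P_tE_{t,\theta}\nu(d\theta)\big)=0$, $P_T=G$; $\dot\Pi_t+\Pi_t(A_t+\bar A_t)+(A_t+\bar A_t)^\top\Pi_t+(C_t+\bar C_t)^\top P_t(C_t+\bar C_t)+\int_\Theta(E_{t,\theta}+\bar E_{t,\theta})^\top P_t(E_{t,\theta}+\bar E_{t,\theta})\nu(d\theta)+Q_t+\bar Q_t-\big[(S_t+\bar S_t)+\Pi_t(B_t+\bar B_t)+(C_t+\bar C_t)^\top P_t(D_t+\bar D_t)+\int_\Theta(E_{t,\theta}+\bar E_{t,\theta})^\top P_t(F_{t,\theta}+\bar F_{t,\theta})\nu(d\theta)\big]\Sigma_{1t}^{-1}\big[(S_t+\bar S_t)^\top+(B_t+\bar B_t)^\top\Pi_t+(D_t+\bar D_t)^\top P_t(C_t+\bar C_t)+\int_\Theta(F_{t,\theta}+\bar F_{t,\theta})^\top P_t(E_{t,\theta}+\bar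 E_{t,\theta})\nu(d\theta)\big]=0$, $\Pi_T=G+\bar G$. Assumption (S) for $\mathcal W$: there is $\alpha_0>0$ such that for all $t$: $R_t\ge\alpha_0I$, $R_t+\bar R_t\ge\alpha_0I$, $Q_t-S_tR_t^{-1}S_t^\top\ge0$, $Q_t+\bar Q_t-(S_t+\bar S_t)(R_t+\bar R_t)^{-1}(S_t+\bar S_t)^\top\ge0$, $G\ge0$, $G+\bar G\ge0$. Under Assumption (S), define $A_1=A-BR^{-1}S^\top$, $\bar A_1=A+\bar A-(B+\bar B)(R+\bar R)^{-1}(S+\bar S)^\top-A_1$, $C_1=C-DR^{-1}S^\top$, $\bar C_1=C+\bar C-(D+\bar D)(R+\bar R)^{-1}(S+\bar S)^\top-C_1$, $E_{1t,\theta}=E_{t,\theta}-F_{t,\theta}R_t^{-1}S_t^\top$, $\bar E_{1t,\theta}=E_{t,\theta}+\bar E_{t,\theta}-(F_{t,\theta}+\bar F_{t,\theta})(R_t+\bar R_t)^{-1}(S_t+\bar S_t)^\top-E_{1t,\theta}$, $Q_1=Q-SR^{-1}S^\top$, $\bar Q_1=Q+\bar Q-(S+\bar S)(R+\bar R)^{-1}(S+\bar S)^\top-Q_1$; $\mathcal C_1=(A_1,\bar A_1,B,\bar B,C_1,\bar C_1,D,\bar D,E_1,\bar E_1,F,\bar F)$ and $\mathcal W_1=(Q_1,\bar Q_1,0,0,R,\bar R,G,\bar G)$. *)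

theory Defs
  imports "HOL-Analysis.Analysis"
begin

text \<open>Matrices are rendered as Cartesian matrices: an n x n real matrix is
  real^'n^'n, an n x m matrix is real^'m^'n (rows indexed by 'n).
  Time-dependent coefficients are functions of t :: real (only t in [0,T] matters),
  jump coefficients are functions of (t, theta).  The measure nu lives on
  Theta = space nu, a subset of the reals.\<close>

record ('n::finite, 'm::finite) coef =
  cA  :: "real \<Rightarrow> real^'n^'n"
  cAb :: "real \<Rightarrow> real^'n^'n"
  cB  :: "real \<Rightarrow> real^'m^'n"
  cBb :: "real \<Rightarrow> real^'m^'n"
  cC  :: "real \<Rightarrow> real^'n^'n"
  cCb :: "real \<Rightarrow> real^'n^'n"
  cD  :: "real \<Rightarrow> real^'m^'n"
  cDb :: "real \<Rightarrow> real^'m^'n"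
  cE  :: "real \<Rightarrow> real \<Rightarrow> real^'n^'n"
  cEb :: "real \<Rightarrow> real \<Rightarrow> real^'n^'n"
  cF  :: "real \<Rightarrow> real \<Rightarrow> real^'m^'n"
  cFb :: "real \<Rightarrow> real \<Rightarrow> real^'m^'n"

record ('n::finite, 'm::finite) wt =
  wQ  :: "real \<Rightarrow> real^'n^'n"
  wQb :: "real \<Rightarrow> real^'n^'n"
  wS  :: "real \<Rightarrow> real^'m^'n"
  wSb :: "real \<Rightarrow> real^'m^'n"
  wR  :: "real \<Rightarrow> real^'m^'m"
  wRb :: "real \<Rightarrow> real^'m^'m"
  wG  :: "real^'n^'n"
  wGb :: "real^'n^'n"

definition symmetric_mat :: "real^'k^'k \<Rightarrow> bool" where
  "symmetric_mat M \<longleftrightarrow> transpose M = M"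

definition psd :: "real^'k^'k \<Rightarrow> bool" where
  "psd M \<longleftrightarrow> (\<forall>x. 0 \<le> x \<bullet> (M *v x))"

definition loewner_ge :: "real^'k^'k \<Rightarrow> real^'k^'k \<Rightarrow> bool" where
  "loewner_ge M N \<longleftrightarrow> psd (M - N)"

definition Linf :: "real \<Rightarrow> (real \<Rightarrow> 'a::real_normed_vector) \<Rightarrow> bool" where
  "Linf T X \<longleftrightarrow> bounded (X ` {0..T})"

definition L2nu :: "real measure \<Rightarrow> real \<Rightarrow> (real \<Rightarrow> real \<Rightarrow> 'a::euclidean_space) \<Rightarrow> bool" where
  "L2nu \<nu> T X \<longleftrightarrow>
     (\<lambda>(t,\<theta>). X t \<theta>) \<in> borel_measurable (restrict_space lborel {0..T} \<Otimes>\<^sub>M \<nu>) \<and>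
     (\<exists>K::real. \<forall>t\<in>{0..T}. (\<integral>\<^sup>+\<theta>. ennreal ((norm (X t \<theta>))\<^sup>2) \<partial>\<nu>) \<le> ennreal K)"

definition coef_tuple :: "real measure \<Rightarrow> real \<Rightarrow> ('n::finite,'m::finite) coef \<Rightarrow> bool" where
  "coef_tuple \<nu> T c \<longleftrightarrow>
     Linf T (cA c) \<and> Linf T (cAb c) \<and> Linf T (cC c) \<and> Linf T (cCb c) \<and>
     Linf T (cB c) \<and> Linf T (cBb c) \<and> Linf T (cD c) \<and> Linf T (cDb c) \<and>
     L2nu \<nu> T (cE c) \<and> L2nu \<nu> T (cEb c) \<and> L2nu \<nu> T (cF c) \<and> L2nu \<nu> T (cFb c)"

definition weight_tuple :: "real \<Rightarrow> ('n::finite,'m::finite) wt \<Rightarrow> bool" where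
  "weight_tuple T w \<longleftrightarrow>
     Linf T (wQ w) \<and> Linf T (wQb w) \<and> Linf T (wR w) \<and> Linf T (wRb w) \<and>
     Linf T (wS w) \<and> Linf T (wSb w) \<and>
     (\<forall>t\<in>{0..T}. symmetric_mat (wQ w t) \<and> symmetric_mat (wQb w t) \<and>
                  symmetric_mat (wR w t) \<and> symmetric_mat (wRb w t)) \<and>
     symmetric_mat (wG w) \<and> symmetric_mat (wGb w)"

definition assumption_S :: "real \<Rightarrow> ('n::finite,'m::finite) wt \<Rightarrow> bool" where
  "assumption_S T w \<longleftrightarrow> (\<exists>\<alpha>0>0. \<forall>t\<in>{0..T}.
     loewner_ge (wR w t) (\<alpha>0 *\<^sub>R mat 1) \<and>
     loewner_ge (wR w t + wRb w t) (\<alpha>0 *\<^sub>R mat 1) \<and>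
     psd (wQ w t - wS w t ** matrix_inv (wR w t) ** transpose (wS w t)) \<and>
     psd (wQ w t + wQb w t - (wS w t + wSb w t) ** matrix_inv (wR w t + wRb w t)
            ** transpose (wS w t + wSb w t)) \<and>
     psd (wG w) \<and> psd (wG w + wGb w))"

definition Sig0 :: "real measure \<Rightarrow> ('n::finite,'m::finite) coef \<Rightarrow> ('n,'m) wt \<Rightarrow> real
                    \<Rightarrow> real^'n^'n \<Rightarrow> real^'m^'m" where
  "Sig0 \<nu> c w t P = wR w t + transpose (cD c t) ** P ** cD c t
     + (LINT \<theta>|\<nu>. transpose (cF c t \<theta>) ** P ** cF c t \<theta>)"

definition Sig1 :: "real measure \<Rightarrow> ('n::finite,'m::finite) coef \<Rightarrow> ('n,'m) wt \<Rightarrow> real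
                    \<Rightarrow> real^'n^'n \<Rightarrow> real^'m^'m" where
  "Sig1 \<nu> c w t P = wR w t + wRb w t
     + transpose (cD c t + cDb c t) ** P ** (cD c t + cDb c t)
     + (LINT \<theta>|\<nu>. transpose (cF c t \<theta> + cFb c t \<theta>) ** P ** (cF c t \<theta> + cFb c t \<theta>))"

text \<open>Left-hand side of the first Riccati equation at time t, with Pd standing for dP/dt.\<close>
definition ric1 :: "real measure \<Rightarrow> ('n::finite,'m::finite) coef \<Rightarrow> ('n,'m) wt \<Rightarrow> real
                    \<Rightarrow> real^'n^'n \<Rightarrow> real^'n^'n \<Rightarrow> real^'n^'n" where
  "ric1 \<nu> c w t Pd P =
     Pd + P ** cA c t + transpose (cA c t) ** P + transpose (cC c t) ** P ** cC c t
     + (LINT \<theta>|\<nu>. transpose (cE c t \<theta>) ** P ** cE c t \<theta>) + wQ w t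
     - (wS w t + P ** cB c t + transpose (cC c t) ** P ** cD c t
          + (LINT \<theta>|\<nu>. transpose (cE c t \<theta>) ** P ** cF c t \<theta>))
       ** matrix_inv (Sig0 \<nu> c w t P)
       ** (transpose (wS w t) + transpose (cB c t) ** P + transpose (cD c t) ** P ** cC c t
          + (LINT \<theta>|\<nu>. transpose (cF c t \<theta>) ** P ** cE c t \<theta>))"

text \<open>Left-hand side of the second Riccati equation at time t, with Pid standing for d\<Pm>/dt.\<close>
definition ric2 :: "real measure \<Rightarrow> ('n::finite,'m::finite) coef \<Rightarrow> ('n,'m) wt \<Rightarrow> real
                    \<Rightarrow> real^'n^'n \<Rightarrow> real^'n^'n \<Rightarrow> real^'n^'n \<Rightarrow> real^'n^'n" where
  "ric2 \<nu> c w t Pid P Pm =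
     Pid + Pm ** (cA c t + cAb c t) + transpose (cA c t + cAb c t) ** Pm
     + transpose (cC c t + cCb c t) ** P ** (cC c t + cCb c t)
     + (LINT \<theta>|\<nu>. transpose (cE c t \<theta> + cEb c t \<theta>) ** P ** (cE c t \<theta> + cEb c t \<theta>))
     + wQ w t + wQb w t
     - ((wS w t + wSb w t) + Pm ** (cB c t + cBb c t)
          + transpose (cC c t + cCb c t) ** P ** (cD c t + cDb c t)
          + (LINT \<theta>|\<nu>. transpose (cE c t \<theta> + cEb c t \<theta>) ** P ** (cF c t \<theta> + cFb c t \<theta>)))
       ** matrix_inv (Sig1 \<nu> c w t P)
       ** (transpose (wS w t + wSb w t) + transpose (cB c t + cBb c t) ** Pm
          + transpose (cD c t + cDb c t) ** P ** (cC c t + cCb c t)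
          + (LINT \<theta>|\<nu>. transpose (cF c t \<theta> + cFb c t \<theta>) ** P ** (cE c t \<theta> + cEb c t \<theta>)))"

definition coef1 :: "('n::finite,'m::finite) coef \<Rightarrow> ('n,'m) wt \<Rightarrow> ('n,'m) coef" where
  "coef1 c w =
   (let A1 = (\<lambda>t. cA c t - cB c t ** matrix_inv (wR w t) ** transpose (wS w t));
        C1 = (\<lambda>t. cC c t - cD c t ** matrix_inv (wR w t) ** transpose (wS w t));
        E1 = (\<lambda>t \<theta>. cE c t \<theta> - cF c t \<theta> ** matrix_inv (wR w t) ** transpose (wS w t))
    in \<lparr> cA = A1,
         cAb = (\<lambda>t. cA c t + cAb c t - (cB c t + cBb c t) ** matrix_inv (wR w t + wRb w t)
                     ** transpose (wS w t + wSb w t) - A1 t),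
         cB = cB c, cBb = cBb c,
         cC = C1,
         cCb = (\<lambda>t. cC c t + cCb c t - (cD c t + cDb c t) ** matrix_inv (wR w t + wRb w t)
                     ** transpose (wS w t + wSb w t) - C1 t),
         cD = cD c, cDb = cDb c,
         cE = E1,
         cEb = (\<lambda>t \<theta>. cE c t \<theta> + cEb c t \<theta> - (cF c t \<theta> + cFb c t \<theta>)
                     ** matrix_inv (wR w t + wRb w t) ** transpose (wS w t + wSb w t) - E1 t \<theta>),
         cF = cF c, cFb = cFb c \<rparr>)"

definition wt1 :: "('n::finite,'m::finite) wt \<Rightarrow> ('n,'m) wt" where
  "wt1 w =
   (let Q1 = (\<lambda>t. wQ w t - wS w t ** matrix_inv (wR w t) ** transpose (wS w t))
    in \<lparr> wQ = Q1,
         wQb = (\<lambda>t. wQ w t + wQb w t - (wS w t + wSb w t) ** matrix_inv (wR w t + wRb w t)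
                     ** transpose (wS w t + wSb w t) - Q1 t),
         wS = (\<lambda>t. 0), wSb = (\<lambda>t. 0),
         wR = wR w, wRb = wRb w,
         wG = wG w, wGb = wGb w \<rparr>)"

end

theory Submission
  imports Defs
begin

text \<open>Both Riccati left-hand sides have the shape \<open>N - L \<Sigma>\<inverse> M\<close>, a Schur complement of the
  block matrix \<open>[[N, L], [M, \<Sigma>]]\<close>. Passing from \<open>(\<C>, \<W>)\<close> to \<open>(\<C>\<^sub>1, \<W>\<^sub>1)\<close> replaces
  \<open>A, C, E, Q, S\<close> by \<open>A - BK, C - DK, E - FK, Q - SK, 0\<close> with \<open>K = R\<inverse>S\<^sup>T\<close>, leaving \<open>B, D, F, R\<close>
  and hence \<open>\<Sigma>\<close> unchanged. Because \<open>RK = S\<^sup>T\<close> and \<open>R\<close> is symmetric, this turns the block matrix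
  into its congruence by \<open>[[I, -K\<^sup>T], [0, I]]\<close>, which does not change the Schur complement.
  The jump integrals follow along by linearity, which needs the square integrability of
  \<open>E, F\<close> supplied by the \<open>L\<^sup>2\<^sub>\<nu>\<close> hypotheses.\<close>

lemma matrix_add_rdistrib: "((A::real^'n^'m) + B) ** C = A ** C + B ** C"
  by (vector matrix_matrix_mult_def sum.distrib[symmetric] field_simps)

lemma matrix_diff_rdistrib: "((A::real^'n^'m) - B) ** C = A ** C - B ** C"
  by (vector matrix_matrix_mult_def sum_subtractf[symmetric] field_simps)

lemma matrix_diff_ldistrib: "(A::real^'n^'m) ** (B - C) = A ** B - A ** C"
  by (vector matrix_matrix_mult_def sum_subtractf[symmetric] field_simps)

lemma transpose_add: "transpose ((A::real^'n^'m) + B) = transpose A + transpose B"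
  by (simp add: transpose_def vec_eq_iff)

lemma transpose_diff: "transpose ((A::real^'n^'m) - B) = transpose A - transpose B"
  by (simp add: transpose_def vec_eq_iff)

lemma transpose_zero: "transpose (0::real^'n^'m) = 0"
  by (simp add: transpose_def vec_eq_iff)

lemmas matrix_ring_simps = matrix_add_ldistrib matrix_add_rdistrib matrix_diff_ldistrib
  matrix_diff_rdistrib transpose_add transpose_diff transpose_zero matrix_transpose_mul
  matrix_mul_assoc

lemma matrix_inv_right: "invertible A \<Longrightarrow> A ** matrix_inv A = mat 1"
  and matrix_inv_left: "invertible A \<Longrightarrow> matrix_inv A ** A = mat 1"
  unfolding invertible_def matrix_inv_def by (metis (mono_tags, lifting) someI_ex)+

lemma invertible_if_loewner_ge_scaled_id:
  fixes R :: "real^'m^'m"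
  assumes "loewner_ge R (a *\<^sub>R mat 1)" and "a > 0"
  shows "invertible R"
proof -
  have "x = 0" if "R *v x = 0" for x
  proof -
    have "0 \<le> x \<bullet> ((R - a *\<^sub>R mat 1) *v x)"
      using assms(1) unfolding loewner_ge_def psd_def by blast
    also have "\<dots> = - a * (x \<bullet> x)"
      using that by (simp add: matrix_vector_mult_diff_rdistrib scaleR_matrix_vector_assoc[symmetric])
    finally have "x \<bullet> x \<le> 0"
      using \<open>a > 0\<close> by (simp add: mult_le_0_iff)
    then show "x = 0"
      by (metis inner_eq_zero_iff inner_ge_zero order_antisym)
  qed
  then show ?thesis
    unfolding invertible_left_inverse matrix_left_invertible_ker by blast
qed

lemma bounded_linear_matrix_mult_right: "bounded_linear (\<lambda>X::real^'n^'m. X ** (K::real^'p^'n))"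
  unfolding linear_conv_bounded_linear[symmetric]
  by (rule linearI) (simp_all add: matrix_add_rdistrib scalar_matrix_assoc)

lemma bounded_linear_matrix_mult_left: "bounded_linear (\<lambda>X::real^'p^'n. (K::real^'n^'m) ** X)"
  unfolding linear_conv_bounded_linear[symmetric]
  by (rule linearI) (simp_all add: matrix_add_ldistrib matrix_scalar_ac scalar_matrix_assoc)

lemma bounded_bilinear_transpose_mult:
  "bounded_bilinear (\<lambda>(X::real^'m^'n) (Y::real^'p^'n). transpose X ** (P::real^'n^'n) ** Y)"
  unfolding bilinear_conv_bounded_bilinear[symmetric] bilinear_def
proof (intro conjI allI)
  show "linear (\<lambda>Y::real^'p^'n. transpose X ** P ** Y)" for X :: "real^'m^'n"
    by (rule linearI) (simp_all add: matrix_add_ldistrib matrix_scalar_ac scalar_matrix_assoc[symmetric])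
  show "linear (\<lambda>X::real^'m^'n. transpose X ** P ** Y)" for Y :: "real^'p^'n"
    by (rule linearI)
      (simp_all add: matrix_add_rdistrib transpose_add transpose_scalar scalar_matrix_assoc[symmetric])
qed

lemma integrable_matrix_mult_right:
  "integrable M X \<Longrightarrow> integrable M (\<lambda>x. (X x::real^'n^'m) ** (K::real^'p^'n))"
  and integral_matrix_mult_right:
  "integrable M X \<Longrightarrow> (LINT x|M. X x ** K) = (LINT x|M. X x) ** K"
  using integrable_bounded_linear integral_bounded_linear bounded_linear_matrix_mult_right by blast+

lemma integrable_matrix_mult_left:
  "integrable M X \<Longrightarrow> integrable M (\<lambda>x. (K::real^'n^'m) ** (X x::real^'p^'n))"
  and integral_matrix_mult_left:
  "integrable M X \<Longrightarrow> (LINT x|M. K ** X x) = K ** (LINT x|M. X x)"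
  using integrable_bounded_linear integral_bounded_linear bounded_linear_matrix_mult_left by blast+

definition square_integrable :: "'a measure \<Rightarrow> ('a \<Rightarrow> 'b::euclidean_space) \<Rightarrow> bool" where
  "square_integrable M X \<longleftrightarrow> X \<in> borel_measurable M \<and> integrable M (\<lambda>x. (norm (X x))\<^sup>2)"

lemma square_integrable_add:
  assumes "square_integrable M X" and "square_integrable M Y"
  shows "square_integrable M (\<lambda>x. X x + Y x)"
proof -
  have bound: "(norm (X x + Y x))\<^sup>2 \<le> 2 * ((norm (X x))\<^sup>2 + (norm (Y x))\<^sup>2)" for x
    using norm_triangle_ineq[of "X x" "Y x"] norm_ge_zero[of "X x + Y x"]
    by (smt (verit) power_mono sum_squares_bound power2_sum)
  have meas: "(\<lambda>x. X x + Y x) \<in> borel_measurable M"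
    using assms unfolding square_integrable_def by auto
  have "integrable M (\<lambda>x. 2 * ((norm (X x))\<^sup>2 + (norm (Y x))\<^sup>2))"
    using assms unfolding square_integrable_def by auto
  then have "integrable M (\<lambda>x. (norm (X x + Y x))\<^sup>2)"
    by (rule Bochner_Integration.integrable_bound) (use meas bound in \<open>auto intro!: AE_I2\<close>)
  with meas show ?thesis
    unfolding square_integrable_def by blast
qed

lemma integrable_bounded_bilinear_square_integrable:
  fixes h :: "'a::euclidean_space \<Rightarrow> 'b::euclidean_space \<Rightarrow> 'c::euclidean_space"
  assumes h: "bounded_bilinear h"
    and "square_integrable M X" and "square_integrable M Y"
  shows "integrable M (\<lambda>x. h (X x) (Y x))"
proof -
  obtain K where "K > 0" and K: "\<And>a b. norm (h a b) \<le> norm a * norm b * K"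
    using bounded_bilinear.pos_bounded[OF h] by blast
  have bound: "norm (h (X x) (Y x)) \<le> ((norm (X x))\<^sup>2 + (norm (Y x))\<^sup>2) * K" for x
  proof -
    have "norm (X x) * norm (Y x) \<le> (norm (X x))\<^sup>2 + (norm (Y x))\<^sup>2"
      using sum_squares_bound[of "norm (X x)" "norm (Y x)"]
        mult_nonneg_nonneg[OF norm_ge_zero norm_ge_zero, of "X x" "Y x"] by linarith
    then have "norm (X x) * norm (Y x) * K \<le> ((norm (X x))\<^sup>2 + (norm (Y x))\<^sup>2) * K"
      using \<open>K > 0\<close> by (simp add: mult_right_mono)
    then show ?thesis
      using K[of "X x" "Y x"] by linarith
  qed
  have "integrable M (\<lambda>x. ((norm (X x))\<^sup>2 + (norm (Y x))\<^sup>2) * K)"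
    using assms(2,3) unfolding square_integrable_def by simp
  moreover have "(\<lambda>x. h (X x) (Y x)) \<in> borel_measurable M"
  proof -
    have "X \<in> borel_measurable M" "Y \<in> borel_measurable M"
      using assms(2,3) unfolding square_integrable_def by blast+
    moreover have "continuous_on UNIV (\<lambda>p. h (fst p) (snd p))"
      using bounded_bilinear.continuous_on[OF h continuous_on_fst continuous_on_snd,
          OF continuous_on_id continuous_on_id] .
    ultimately show ?thesis
      by (rule borel_measurable_continuous_Pair)
  qed
  ultimately show ?thesis
    by (rule Bochner_Integration.integrable_bound) (auto intro!: AE_I2 order_trans[OF bound abs_ge_self])
qed

lemma square_integrable_L2nu:
  assumes "L2nu \<nu> T X" and "t \<in> {0..T}"
  shows "square_integrable \<nu> (X t)"
proof -
  have "(\<lambda>(t,\<theta>). X t \<theta>) \<in> borel_measurable (restrict_space lborel {0..T} \<Otimes>\<^sub>M \<nu>)"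
    using assms(1) unfolding L2nu_def by blast
  from measurable_Pair2[OF this] have "X t \<in> borel_measurable \<nu>"
    using assms(2) by simp
  moreover obtain K :: real where "(\<integral>\<^sup>+\<theta>. ennreal ((norm (X t \<theta>))\<^sup>2) \<partial>\<nu>) \<le> ennreal K"
    using assms unfolding L2nu_def by blast
  then have "(\<integral>\<^sup>+\<theta>. ennreal ((norm (X t \<theta>))\<^sup>2) \<partial>\<nu>) < \<infinity>"
    using le_less_trans by fastforce
  ultimately show ?thesis
    unfolding square_integrable_def by (simp add: integrable_iff_bounded)
qed

lemma integral_transpose_diff_mult_expand:
  fixes E :: "'a \<Rightarrow> real^'p^'n" and F :: "'a \<Rightarrow> real^'m^'n"
    and G :: "'a \<Rightarrow> real^'q^'n" and H :: "'a \<Rightarrow> real^'r^'n"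
  assumes "square_integrable M E" "square_integrable M F"
    and "square_integrable M G" "square_integrable M H"
  shows "(LINT x|M. transpose (E x - F x ** K) ** P ** (G x - H x ** K')) =
    (LINT x|M. transpose (E x) ** P ** G x) - (LINT x|M. transpose (E x) ** P ** H x) ** K'
    - transpose K ** (LINT x|M. transpose (F x) ** P ** G x)
    + transpose K ** (LINT x|M. transpose (F x) ** P ** H x) ** K'"
proof -
  note integrable = integrable_bounded_bilinear_square_integrable[OF bounded_bilinear_transpose_mult]
  have "integrable M (\<lambda>x. transpose (E x) ** P ** G x)" "integrable M (\<lambda>x. transpose (E x) ** P ** H x)"
    "integrable M (\<lambda>x. transpose (F x) ** P ** G x)" "integrable M (\<lambda>x. transpose (F x) ** P ** H x)"
    using integrable assms by blast+
  moreover have "transpose (E x - F x ** K) ** P ** (G x - H x ** K') =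
    transpose (E x) ** P ** G x - (transpose (E x) ** P ** H x) ** K'
    - transpose K ** (transpose (F x) ** P ** G x) + (transpose K ** (transpose (F x) ** P ** H x)) ** K'"
    for x
    by (simp add: matrix_ring_simps)
  ultimately show ?thesis
    by (simp add: integrable_matrix_mult_left integrable_matrix_mult_right
        integral_matrix_mult_left integral_matrix_mult_right)
qed

lemma schur_complement_congruence:
  fixes N :: "real^'n^'n" and L :: "real^'m^'n" and M K :: "real^'n^'m"
    and \<Sigma> \<Sigma>' :: "real^'m^'m"
  assumes "\<Sigma> ** \<Sigma>' = mat 1" and "\<Sigma>' ** \<Sigma> = mat 1"
  shows "(N - L ** K - transpose K ** M + transpose K ** \<Sigma> ** K)
      - (L - transpose K ** \<Sigma>) ** \<Sigma>' ** (M - \<Sigma> ** K) = N - L ** \<Sigma>' ** M"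
proof -
  have [simp]: "X ** \<Sigma> ** \<Sigma>' = X" "X ** \<Sigma>' ** \<Sigma> = X" for X :: "real^'m^'p"
    by (metis assms matrix_mul_assoc matrix_mul_rid)+
  show ?thesis
    by (simp add: matrix_ring_simps algebra_simps)
qed

definition riccati_lhs ::
  "'a measure \<Rightarrow> real^'n^'n \<Rightarrow> real^'n^'n \<Rightarrow> real^'n^'n \<Rightarrow> real^'n^'n \<Rightarrow> real^'m^'n
    \<Rightarrow> real^'n^'n \<Rightarrow> real^'m^'n \<Rightarrow> ('a \<Rightarrow> real^'n^'n) \<Rightarrow> ('a \<Rightarrow> real^'m^'n)
    \<Rightarrow> real^'n^'n \<Rightarrow> real^'m^'n \<Rightarrow> real^'m^'m \<Rightarrow> real^'n^'n" where
  "riccati_lhs \<nu> Pd P Pm A B C D E F Q S R =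
     Pd + Pm ** A + transpose A ** Pm + transpose C ** P ** C
     + (LINT \<theta>|\<nu>. transpose (E \<theta>) ** P ** E \<theta>) + Q
     - (S + Pm ** B + transpose C ** P ** D + (LINT \<theta>|\<nu>. transpose (E \<theta>) ** P ** F \<theta>))
       ** matrix_inv (R + transpose D ** P ** D + (LINT \<theta>|\<nu>. transpose (F \<theta>) ** P ** F \<theta>))
       ** (transpose S + transpose B ** Pm + transpose D ** P ** C
          + (LINT \<theta>|\<nu>. transpose (F \<theta>) ** P ** E \<theta>))"

lemma riccati_lhs_shift:
  fixes R :: "real^'m^'m" and K :: "real^'n^'m"
  assumes "square_integrable \<nu> E" and "square_integrable \<nu> F"
    and "transpose R = R" and RK: "R ** K = transpose S"
    and "invertible (R + transpose D ** P ** D + (LINT \<theta>|\<nu>. transpose (F \<theta>) ** P ** F \<theta>))"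
  shows "riccati_lhs \<nu> Pd P Pm (A - B ** K) B (C - D ** K) D (\<lambda>\<theta>. E \<theta> - F \<theta> ** K) F
      (Q - S ** K) 0 R = riccati_lhs \<nu> Pd P Pm A B C D E F Q S R"
proof -
  define \<Sigma> where "\<Sigma> = R + transpose D ** P ** D + (LINT \<theta>|\<nu>. transpose (F \<theta>) ** P ** F \<theta>)"
  define N where "N = Pd + Pm ** A + transpose A ** Pm + transpose C ** P ** C
    + (LINT \<theta>|\<nu>. transpose (E \<theta>) ** P ** E \<theta>) + Q"
  define L where "L = S + Pm ** B + transpose C ** P ** D + (LINT \<theta>|\<nu>. transpose (E \<theta>) ** P ** F \<theta>)"
  define M where "M = transpose S + transpose B ** Pm + transpose D ** P ** C
    + (LINT \<theta>|\<nu>. transpose (F \<theta>) ** P ** E \<theta>)"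
  have KR: "transpose K ** R = S"
    by (metis RK \<open>transpose R = R\<close> matrix_transpose_mul transpose_transpose)
  have KS: "transpose K ** transpose S = S ** K"
    by (metis RK KR matrix_mul_assoc)
  note expand = integral_transpose_diff_mult_expand
  have N': "Pd + Pm ** (A - B ** K) + transpose (A - B ** K) ** Pm
      + transpose (C - D ** K) ** P ** (C - D ** K)
      + (LINT \<theta>|\<nu>. transpose (E \<theta> - F \<theta> ** K) ** P ** (E \<theta> - F \<theta> ** K)) + (Q - S ** K)
      = N - L ** K - transpose K ** M + transpose K ** \<Sigma> ** K"
    using expand[OF assms(1,2,1,2)] unfolding N_def L_def M_def \<Sigma>_def
    by (simp add: matrix_ring_simps KR KS algebra_simps)
  have L': "0 + Pm ** B + transpose (C - D ** K) ** P ** D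
      + (LINT \<theta>|\<nu>. transpose (E \<theta> - F \<theta> ** K) ** P ** F \<theta>) = L - transpose K ** \<Sigma>"
    using expand[OF assms(1,2,2,2), where K' = 0] unfolding L_def \<Sigma>_def
    by (simp add: matrix_ring_simps KR algebra_simps)
  have M': "transpose 0 + transpose B ** Pm + transpose D ** P ** (C - D ** K)
      + (LINT \<theta>|\<nu>. transpose (F \<theta>) ** P ** (E \<theta> - F \<theta> ** K)) = M - \<Sigma> ** K"
    using expand[OF assms(2,2,1,2), where K = 0] unfolding M_def \<Sigma>_def
    by (simp add: matrix_ring_simps RK algebra_simps)
  have "riccati_lhs \<nu> Pd P Pm (A - B ** K) B (C - D ** K) D (\<lambda>\<theta>. E \<theta> - F \<theta> ** K) F (Q - S ** K) 0 R
      = (N - L ** K - transpose K ** M + transpose K ** \<Sigma> ** K)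
        - (L - transpose K ** \<Sigma>) ** matrix_inv \<Sigma> ** (M - \<Sigma> ** K)"
    unfolding riccati_lhs_def N' L' M' \<Sigma>_def ..
  also have "\<dots> = N - L ** matrix_inv \<Sigma> ** M"
    using assms(5) unfolding \<Sigma>_def[symmetric]
    by (intro schur_complement_congruence matrix_inv_right matrix_inv_left)
  also have "\<dots> = riccati_lhs \<nu> Pd P Pm A B C D E F Q S R"
    unfolding riccati_lhs_def N_def L_def M_def \<Sigma>_def ..
  finally show ?thesis .
qed

lemma ric1_eq_riccati_lhs:
  "ric1 \<nu> c w t Pd P = riccati_lhs \<nu> Pd P P (cA c t) (cB c t) (cC c t) (cD c t) (cE c t) (cF c t)
     (wQ w t) (wS w t) (wR w t)"
  unfolding ric1_def riccati_lhs_def Sig0_def ..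

lemma ric2_eq_riccati_lhs:
  "ric2 \<nu> c w t Pid P Pm = riccati_lhs \<nu> Pid P Pm (cA c t + cAb c t) (cB c t + cBb c t)
     (cC c t + cCb c t) (cD c t + cDb c t) (\<lambda>\<theta>. cE c t \<theta> + cEb c t \<theta>) (\<lambda>\<theta>. cF c t \<theta> + cFb c t \<theta>)
     (wQ w t + wQb w t) (wS w t + wSb w t) (wR w t + wRb w t)"
  unfolding ric2_def riccati_lhs_def Sig1_def by (simp add: add.assoc)

lemma ric1_coef1_wt1:
  assumes "square_integrable \<nu> (cE c t)" and "square_integrable \<nu> (cF c t)"
    and "symmetric_mat (wR w t)" and "invertible (wR w t)" and "invertible (Sig0 \<nu> c w t P)"
  shows "ric1 \<nu> (coef1 c w) (wt1 w) t Pd P = ric1 \<nu> c w t Pd P"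
proof -
  define K where "K = matrix_inv (wR w t) ** transpose (wS w t)"
  have "wR w t ** K = transpose (wS w t)"
    unfolding K_def using assms(4) by (simp add: matrix_mul_assoc matrix_inv_right)
  have "ric1 \<nu> (coef1 c w) (wt1 w) t Pd P = riccati_lhs \<nu> Pd P P (cA c t - cB c t ** K) (cB c t)
      (cC c t - cD c t ** K) (cD c t) (\<lambda>\<theta>. cE c t \<theta> - cF c t \<theta> ** K) (cF c t)
      (wQ w t - wS w t ** K) 0 (wR w t)"
    by (simp add: ric1_eq_riccati_lhs coef1_def wt1_def Let_def K_def matrix_mul_assoc)
  also have "\<dots> = ric1 \<nu> c w t Pd P"
    unfolding ric1_eq_riccati_lhs using assms \<open>wR w t ** K = transpose (wS w t)\<close>
    by (intro riccati_lhs_shift) (simp_all add: symmetric_mat_def Sig0_def)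
  finally show ?thesis .
qed

lemma ric2_coef1_wt1:
  assumes "square_integrable \<nu> (\<lambda>\<theta>. cE c t \<theta> + cEb c t \<theta>)"
    and "square_integrable \<nu> (\<lambda>\<theta>. cF c t \<theta> + cFb c t \<theta>)"
    and "symmetric_mat (wR w t + wRb w t)" and "invertible (wR w t + wRb w t)"
    and "invertible (Sig1 \<nu> c w t P)"
  shows "ric2 \<nu> (coef1 c w) (wt1 w) t Pid P Pm = ric2 \<nu> c w t Pid P Pm"
proof -
  define K where "K = matrix_inv (wR w t + wRb w t) ** transpose (wS w t + wSb w t)"
  have "(wR w t + wRb w t) ** K = transpose (wS w t + wSb w t)"
    unfolding K_def using assms(4) by (simp add: matrix_mul_assoc matrix_inv_right)
  have "ric2 \<nu> (coef1 c w) (wt1 w) t Pid P Pm = riccati_lhs \<nu> Pid P Pm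
      (cA c t + cAb c t - (cB c t + cBb c t) ** K) (cB c t + cBb c t)
      (cC c t + cCb c t - (cD c t + cDb c t) ** K) (cD c t + cDb c t)
      (\<lambda>\<theta>. cE c t \<theta> + cEb c t \<theta> - (cF c t \<theta> + cFb c t \<theta>) ** K) (\<lambda>\<theta>. cF c t \<theta> + cFb c t \<theta>)
      (wQ w t + wQb w t - (wS w t + wSb w t) ** K) 0 (wR w t + wRb w t)"
    by (simp add: ric2_eq_riccati_lhs coef1_def wt1_def Let_def K_def matrix_mul_assoc add_diff_eq)
  also have "\<dots> = ric2 \<nu> c w t Pid P Pm"
    unfolding ric2_eq_riccati_lhs using assms \<open>(wR w t + wRb w t) ** K = transpose (wS w t + wSb w t)\<close>
    by (intro riccati_lhs_shift) (simp_all add: symmetric_mat_def Sig1_def)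
  finally show ?thesis .
qed

theorem lemma3p3:
  fixes T :: real and \<nu> :: "real measure"
    and c :: "('n::finite, 'm::finite) coef" and w :: "('n, 'm) wt"
  assumes "T > 0"
    and "space \<nu> \<noteq> {}" and "0 \<notin> space \<nu>"
    and "sets \<nu> = sets (restrict_space borel (space \<nu>))"
    and "sigma_finite_measure \<nu>"
    and "(\<integral>\<^sup>+\<theta>. ennreal (min 1 (\<theta>\<^sup>2)) \<partial>\<nu>) < \<infinity>"
    and "coef_tuple \<nu> T c" and "weight_tuple T w"
    and "assumption_S T w"
  shows "wG (wt1 w) = wG w \<and> wG (wt1 w) + wGb (wt1 w) = wG w + wGb w \<and>
    (\<forall>t\<in>{0..T}. \<forall>Pd P Pid Pm.
       symmetric_mat P \<longrightarrow> symmetric_mat Pm \<longrightarrow>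
       invertible (Sig0 \<nu> c w t P) \<longrightarrow> invertible (Sig1 \<nu> c w t P) \<longrightarrow>
       ric1 \<nu> (coef1 c w) (wt1 w) t Pd P = ric1 \<nu> c w t Pd P \<and>
       ric2 \<nu> (coef1 c w) (wt1 w) t Pid P Pm = ric2 \<nu> c w t Pid P Pm)"
proof (intro conjI ballI allI impI)
  show "wG (wt1 w) = wG w" "wG (wt1 w) + wGb (wt1 w) = wG w + wGb w"
    by (simp_all add: wt1_def Let_def)
next
  fix t Pd P Pid Pm
  assume t: "t \<in> {0..T}"
    and Sig_invertible: "invertible (Sig0 \<nu> c w t P)" "invertible (Sig1 \<nu> c w t P)"
  obtain \<alpha> where "\<alpha> > 0" "loewner_ge (wR w t) (\<alpha> *\<^sub>R mat 1)"
    "loewner_ge (wR w t + wRb w t) (\<alpha> *\<^sub>R mat 1)"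
    using assms(9) t unfolding assumption_S_def by blast
  then have R_invertible: "invertible (wR w t)" "invertible (wR w t + wRb w t)"
    by (auto intro: invertible_if_loewner_ge_scaled_id)
  have R_symmetric: "symmetric_mat (wR w t)" "symmetric_mat (wR w t + wRb w t)"
    using assms(8) t unfolding weight_tuple_def symmetric_mat_def by (auto simp: transpose_add)
  have "square_integrable \<nu> (cE c t)" "square_integrable \<nu> (cEb c t)"
    "square_integrable \<nu> (cF c t)" "square_integrable \<nu> (cFb c t)"
    using assms(7) t unfolding coef_tuple_def by (auto intro: square_integrable_L2nu)
  with R_invertible R_symmetric Sig_invertible
  show "ric1 \<nu> (coef1 c w) (wt1 w) t Pd P = ric1 \<nu> c w t Pd P"
    "ric2 \<nu> (coef1 c w) (wt1 w) t Pid P Pm = ric2 \<nu> c w t Pid P Pm"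
    by (auto intro: ric1_coef1_wt1 ric2_coef1_wt1 square_integrable_add)
qed

end
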